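(* Let $d\ge1$ be fixed, let $P$ be a set of $n\ge2$ points in $\mathbb{R}^d$ with spread $\Phi$, and let $\varepsilon\in(0,1/2)$. Let $p_1,\dots,p_n$ be a greedy permutation of $P$ with radii $r_1\ge r_2\ge\cdots$, let $F_i$ be the friend lists, and let $G=(P,E)$ be the directed graph with $E=\{p_j\to p_i : p_j\in F_i,\ i=1,\dots,n\}$, as defined in the context. Then for every query point $q\in\mathbb{R}^d$, the greedy routing procedure described in the context (starting from $p_1$) returns a point $p\in P$ with $d(q,p)\le(1+\varepsilon)\min_{p'\in P}d(q,p')$, and the query time is $O(\varepsilon^{-d-1}\log^2\Phi)$.
   Context: Distances are Euclidean. The spread $\Phi$ of $P$ is the ratio of the largest to the smallest pairwise distance in $P$. Greedy permutation: $p_1\in P$ is arbitrary; for $i\ge2$, $p_i$ is a point of $P\setminus P_{i-1}$ furthest from $P_{i-1}=\{p_1,\dots,p_{i-1}\}$, i.e., maximizing $d(p,P_{i-1})=\min_{x\in P_{i-1}}d(p,x)$. The radii are $r_1=\max_{p\in P}d(p,p_1)$ and, for $i\ge2$, $r_{i-1}=d(p_i,P_{i-1})$. The friend list of $p_i$ ($i\ge2$) is $F_i=P_{i-1}\cap\{x: d(x,p_i)\le 8r_{i-1}/\varepsilon\}$, and $F_1=\emptyset$. In $G$ the outgoing edges of each vertex are stored sorted by increasing index of the destination. Greedy routing for $q$: set the current vertex $c=p_1$; scan the outgoing edges $c\to p_j$ of $c$ in increasing order of $j$, and as soon as an edge with $d(q,p_j)\le(1-\varepsilon/4)d(q,c)$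 is found, set $c=p_j$ and restart scanning the outgoing edges of the new $c$; when all outgoing edges of $c$ are scanned without such a move, return $c$. The constants in the $O(\cdot)$ notation depend only on $d$. *)

theory Defs
  imports "HOL-Analysis.Analysis"
begin

text \<open>Points are indexed 1..n via a function p :: nat => 'a (p i = p_i).
  P_{i-1} = p ` {1..<i}.  Distances are Euclidean (dist).\<close>

definition spread :: "'a::metric_space set \<Rightarrow> real" where
  "spread P = Max {dist x y | x y. x \<in> P \<and> y \<in> P \<and> x \<noteq> y}
             / Min {dist x y | x y. x \<in> P \<and> y \<in> P \<and> x \<noteq> y}"

definition greedy_perm :: "'a::metric_space set \<Rightarrow> (nat \<Rightarrow> 'a) \<Rightarrow> bool" where
  "greedy_perm P p \<longleftrightarrow> bij_betw p {1..card P} P \<and>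
     (\<forall>i \<in> {2..card P}. \<forall>x \<in> P - p ` {1..<i}.
        infdist x (p ` {1..<i}) \<le> infdist (p i) (p ` {1..<i}))"

text \<open>Radii: r_1 = max_{x in P} d(x,p_1); r_{i-1} = d(p_i, P_{i-1}) for i >= 2.\<close>
definition greedy_radius :: "'a::metric_space set \<Rightarrow> (nat \<Rightarrow> 'a) \<Rightarrow> nat \<Rightarrow> real" where
  "greedy_radius P p j =
     (if j = 1 then Max ((\<lambda>x. dist x (p 1)) ` P)
      else infdist (p (Suc j)) (p ` {1..j}))"

definition friend_list :: "'a::metric_space set \<Rightarrow> (nat \<Rightarrow> 'a) \<Rightarrow> real \<Rightarrow> nat \<Rightarrow> 'a set" where
  "friend_list P p \<epsilon> i =
     (if i = 1 then {}
      else {x \<in> p ` {1..<i}. dist x (p i) \<le> 8 * greedy_radius P p (i - 1) / \<epsilon>})"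

text \<open>Outgoing edges p_j -> p_i of p_j in G, as the list of destination indices i,
  sorted increasingly.\<close>
definition out_edges :: "'a::metric_space set \<Rightarrow> (nat \<Rightarrow> 'a) \<Rightarrow> real \<Rightarrow> nat \<Rightarrow> nat list" where
  "out_edges P p \<epsilon> j = filter (\<lambda>i. p j \<in> friend_list P p \<epsilon> i) [1..<Suc (card P)]"

definition improves :: "(nat \<Rightarrow> 'a::metric_space) \<Rightarrow> real \<Rightarrow> 'a \<Rightarrow> nat \<Rightarrow> nat \<Rightarrow> bool" where
  "improves p \<epsilon> q c i \<longleftrightarrow> dist q (p i) \<le> (1 - \<epsilon> / 4) * dist q (p c)"

text \<open>greedy_route P p eps q c r t: greedy routing for query q started at the vertex
  with index c returns the vertex with index r, at cost t, where the cost counts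
  one unit per visited vertex plus one unit per scanned edge.\<close>
inductive greedy_route ::
  "'a::metric_space set \<Rightarrow> (nat \<Rightarrow> 'a) \<Rightarrow> real \<Rightarrow> 'a \<Rightarrow> nat \<Rightarrow> nat \<Rightarrow> nat \<Rightarrow> bool"
  for P p \<epsilon> q where
  stop: "\<not> (\<exists>i \<in> set (out_edges P p \<epsilon> c). improves p \<epsilon> q c i) \<Longrightarrow>
         greedy_route P p \<epsilon> q c c (1 + length (out_edges P p \<epsilon> c))"
| move: "k = length (takeWhile (\<lambda>i. \<not> improves p \<epsilon> q c i) (out_edges P p \<epsilon> c)) \<Longrightarrow>
         k < length (out_edges P p \<epsilon> c) \<Longrightarrow>
         greedy_route P p \<epsilon> q (out_edges P p \<epsilon> c ! k) r t \<Longrightarrow>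
         greedy_route P p \<epsilon> q c r (1 + (k + 1) + t)"

end

theory Submission
  imports Defs
begin

(*
  Let rho be the distance from q to P and D the distance from q to the current vertex p_c.
  Routing maintains the invariant that every earlier point p_i (i < c) is at distance at least
  rho + tau D from q, where tau = eps (2 - eps/4) / 8.  If D > (1 + eps) rho, let g be the first
  index with d(q, p_g) < rho + tau D.  Then g > c, and as the nearest neighbour of q lies within
  r_(g-1) of an earlier point, which is far from q, r_(g-1) >= tau D.  Since p_g is within
  (2 - eps/4) D = 8 tau D / eps of p_c, p_c is a friend of p_g and the edge to p_g improves.
  So routing cannot stop at a point that is not a (1 + eps)-approximation, and the first
  improving edge leads to an index at most g, which preserves the invariant.

  Each move shrinks D by the factor 1 - eps/4, while D >= max(rho, delta/2) before every move
  (delta the minimum distance in P), so there are O(log Phi / eps) moves.  The out-neighbours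
  p_i of a vertex whose radius r_(i-1) lies in a dyadic range [s, 2s) are s-separated and lie in
  a ball of radius 16 s / eps, so a volume argument bounds the out-degree by O(eps^-d log Phi).
*)

lemma card_separated_subset_cball_le:
  fixes S :: "'a::euclidean_space set"
  assumes fin: "finite S" and sub: "S \<subseteq> cball c r" and s0: "0 < s" and r0: "0 \<le> r"
    and sep: "\<And>x y. x \<in> S \<Longrightarrow> y \<in> S \<Longrightarrow> x \<noteq> y \<Longrightarrow> s \<le> dist x y"
  shows "real (card S) \<le> ((r + s/2) / (s/2)) ^ DIM('a)"
proof -
  let ?V = "unit_ball_vol (real DIM('a))"
  have disj: "disjoint_family_on (\<lambda>x. ball x (s/2)) S"
    unfolding disjoint_family_on_def
  proof (intro ballI impI)
    fix x y assume xy: "x \<in> S" "y \<in> S" "x \<noteq> y"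
    show "ball x (s/2) \<inter> ball y (s/2) = {}"
    proof (rule ccontr)
      assume "ball x (s/2) \<inter> ball y (s/2) \<noteq> {}"
      then obtain z where "dist x z < s/2" "dist y z < s/2" by auto
      then have "dist x y < s" using dist_triangle[of x y z] by (simp add: dist_commute)
      with sep[OF xy] show False by simp
    qed
  qed
  have "real (card S) * (?V * (s/2) ^ DIM('a)) = (\<Sum>x\<in>S. measure lborel (ball x (s/2)))"
    using s0 by (simp add: content_ball)
  also have "\<dots> = measure lborel (\<Union>x\<in>S. ball x (s/2))"
    by (rule measure_finite_Union[symmetric, OF fin]) (use s0 in \<open>auto simp: disj emeasure_ball\<close>)
  also have "\<dots> \<le> measure lborel (ball c (r + s/2))"
  proof (intro measure_mono_fmeasurable)
    show "(\<Union>x\<in>S. ball x (s/2)) \<subseteq> ball c (r + s/2)"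
    proof
      fix z assume "z \<in> (\<Union>x\<in>S. ball x (s/2))"
      then obtain x where "x \<in> S" "dist x z < s/2" by auto
      moreover have "dist c x \<le> r" using sub \<open>x \<in> S\<close> by auto
      ultimately show "z \<in> ball c (r + s/2)" using dist_triangle[of c z x] by simp
    qed
  qed (use fin r0 s0 in \<open>auto simp: fmeasurable_def emeasure_ball intro!: sets.finite_UN\<close>)
  also have "\<dots> = ?V * (r + s/2) ^ DIM('a)"
    using s0 r0 by (simp add: content_ball)
  finally have "real (card S) * (s/2) ^ DIM('a) \<le> (r + s/2) ^ DIM('a)"
    by (simp add: mult.left_commute)
  then have "real (card S) \<le> (r + s/2) ^ DIM('a) / (s/2) ^ DIM('a)"
    using s0 by (simp add: pos_le_divide_eq)
  then show ?thesis
    by (simp only: power_divide)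
qed

lemma length_takeWhile_less: "x \<in> set xs \<Longrightarrow> \<not> P x \<Longrightarrow> length (takeWhile P xs) < length xs"
  by (induction xs) auto

lemma sorted_first_satisfying:
  fixes xs :: "'a::linorder list"
  assumes "sorted_wrt (<) xs" and "k = length (takeWhile (\<lambda>x. \<not> Q x) xs)" and "k < length xs"
  shows "xs ! k \<in> set xs" and "Q (xs ! k)" and "\<And>m. m \<in> set xs \<Longrightarrow> Q m \<Longrightarrow> xs ! k \<le> m"
proof -
  show "xs ! k \<in> set xs" "Q (xs ! k)"
    using assms(2,3) nth_length_takeWhile[of "\<lambda>x. \<not> Q x" xs] by auto
  show "xs ! k \<le> m" if "m \<in> set xs" "Q m" for m
    using assms(1) that unfolding assms(2)
    by (induction xs) (auto simp: less_imp_le)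
qed

definition pairwise_dists :: "'a::metric_space set \<Rightarrow> real set" where
  "pairwise_dists P = {dist x y | x y. x \<in> P \<and> y \<in> P \<and> x \<noteq> y}"

lemma finite_pairwise_dists: "finite P \<Longrightarrow> finite (pairwise_dists P)"
proof -
  have "pairwise_dists P \<subseteq> (\<lambda>(x, y). dist x y) ` (P \<times> P)"
    by (auto simp: pairwise_dists_def)
  then show "finite P \<Longrightarrow> ?thesis" by (rule finite_subset) simp
qed

lemma Min_pairwise_dists_le:
  "finite P \<Longrightarrow> x \<in> P \<Longrightarrow> y \<in> P \<Longrightarrow> x \<noteq> y \<Longrightarrow> Min (pairwise_dists P) \<le> dist x y"
  by (rule Min_le[OF finite_pairwise_dists]) (auto simp: pairwise_dists_def)

lemma dist_le_Max_pairwise_dists: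
  "finite P \<Longrightarrow> x \<in> P \<Longrightarrow> y \<in> P \<Longrightarrow> x \<noteq> y \<Longrightarrow> dist x y \<le> Max (pairwise_dists P)"
  by (rule Max_ge[OF finite_pairwise_dists]) (auto simp: pairwise_dists_def)

lemma Min_pairwise_dists_pos:
  assumes "finite P" "x \<in> P" "y \<in> P" "x \<noteq> y"
  shows "0 < Min (pairwise_dists P)"
proof -
  have "Min (pairwise_dists P) \<in> pairwise_dists P"
    using assms by (intro Min_in finite_pairwise_dists) (auto simp: pairwise_dists_def)
  then show ?thesis by (auto simp: pairwise_dists_def)
qed

lemma dyadic_floor_log:
  fixes y :: real
  assumes "1 \<le> y"
  shows "2 ^ nat \<lfloor>log 2 y\<rfloor> \<le> y" and "y < 2 ^ Suc (nat \<lfloor>log 2 y\<rfloor>)"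
proof -
  have "0 \<le> \<lfloor>log 2 y\<rfloor>" using assms by simp
  then have "real_of_int \<lfloor>log 2 y\<rfloor> = real (nat \<lfloor>log 2 y\<rfloor>)" by simp
  moreover have "2 powr \<lfloor>log 2 y\<rfloor> \<le> y \<and> y < 2 powr (\<lfloor>log 2 y\<rfloor> + 1)"
    using assms by (subst floor_log_eq_powr_iff[symmetric]) auto
  moreover have "2 powr (real k + 1) = 2 ^ Suc k" for k :: nat
    using powr_realpow[of 2 "Suc k"] by (simp add: add.commute)
  ultimately show "2 ^ nat \<lfloor>log 2 y\<rfloor> \<le> y" "y < 2 ^ Suc (nat \<lfloor>log 2 y\<rfloor>)"
    by (simp_all add: powr_realpow)
qed

lemma geometric_decay_steps:
  fixes \<epsilon> K :: real
  assumes "0 < \<epsilon>" "\<epsilon> \<le> 4" "1 \<le> K"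
  obtains s :: nat where "(1 - \<epsilon>/4) ^ s * K < 1" and "real s \<le> 4 * ln K / \<epsilon> + 1"
proof
  define s where "s = Suc (nat \<lfloor>4 * ln K / \<epsilon>\<rfloor>)"
  have lnK: "0 \<le> 4 * ln K / \<epsilon>" using assms by simp
  show "real s \<le> 4 * ln K / \<epsilon> + 1"
    using lnK by (simp add: s_def)
  have "4 * ln K / \<epsilon> < real s"
    using lnK by (simp add: s_def) linarith
  then have "ln K < \<epsilon> / 4 * real s"
    using assms(1) by (simp add: field_simps)
  have "(1 - \<epsilon>/4) ^ s \<le> exp (- (\<epsilon>/4)) ^ s"
    using assms(2) exp_ge_add_one_self[of "- (\<epsilon>/4)"] by (intro power_mono) auto
  also have "\<dots> = exp (- (\<epsilon>/4 * real s))"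
    by (simp add: exp_of_nat_mult[symmetric] mult.commute)
  also have "\<dots> < exp (- ln K)"
    using \<open>ln K < \<epsilon> / 4 * real s\<close> by simp
  also have "\<dots> = 1 / K"
    using assms(3) by (simp add: exp_minus inverse_eq_divide)
  finally show "(1 - \<epsilon>/4) ^ s * K < 1"
    using assms(3) by (simp add: field_simps)
qed

locale greedy_permutation =
  fixes P :: "'a::euclidean_space set" and p :: "nat \<Rightarrow> 'a"
  assumes finite_P: "finite P" and two_le_card: "2 \<le> card P" and greedy: "greedy_perm P p"
begin

abbreviation "n \<equiv> card P"
abbreviation "R \<equiv> greedy_radius P p"
abbreviation "\<delta> \<equiv> Min (pairwise_dists P)"
abbreviation "diam \<equiv> Max (pairwise_dists P)"

lemma bij_p: "bij_betw p {1..n} P"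
  using greedy by (simp add: greedy_perm_def)

lemma p_in_P: "1 \<le> i \<Longrightarrow> i \<le> n \<Longrightarrow> p i \<in> P"
  using bij_betw_apply[OF bij_p] by simp

lemma p_eq_iff: "1 \<le> i \<Longrightarrow> i \<le> n \<Longrightarrow> 1 \<le> j \<Longrightarrow> j \<le> n \<Longrightarrow> p i = p j \<longleftrightarrow> i = j"
  using bij_betw_imp_inj_on[OF bij_p] by (auto dest: inj_onD)

lemma p_in_prefix_iff: "1 \<le> i \<Longrightarrow> i \<le> n \<Longrightarrow> m \<le> n \<Longrightarrow> p i \<in> p ` {1..<m} \<longleftrightarrow> i < m"
  using p_eq_iff by fastforce

lemma image_p: "p ` {1..n} = P"
  using bij_betw_imp_surj_on[OF bij_p] .

lemma infdist_prefix_le: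
  "2 \<le> i \<Longrightarrow> i \<le> n \<Longrightarrow> x \<in> P - p ` {1..<i} \<Longrightarrow>
     infdist x (p ` {1..<i}) \<le> infdist (p i) (p ` {1..<i})"
  using greedy by (auto simp: greedy_perm_def)

lemma prefix_two: "p ` {1..<2} = {p 1}"
proof -
  have "{1..<2::nat} = {1}" by auto
  then show ?thesis by simp
qed

lemma radius_eq_infdist: "2 \<le> j \<Longrightarrow> R j = infdist (p (Suc j)) (p ` {1..<Suc j})"
  by (simp add: greedy_radius_def atLeastLessThanSuc_atLeastAtMost)

lemma infdist_prefix_le_radius:
  assumes "2 \<le> m" "m \<le> n" "x \<in> P"
  shows "infdist x (p ` {1..<m}) \<le> R (m - 1)"
proof (cases "m = 2")
  case True
  then show ?thesis
    using finite_P assms(3) unfolding True prefix_two by (auto simp: greedy_radius_def intro!: Max_ge)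
next
  case False
  have "R (m - 1) = infdist (p m) (p ` {1..<m})"
    using radius_eq_infdist[of "m - 1"] False assms by simp
  moreover have "infdist x (p ` {1..<m}) \<le> infdist (p m) (p ` {1..<m})"
    using infdist_prefix_le[OF assms(1,2)] assms(3) by (cases "x \<in> p ` {1..<m}") (auto simp: infdist_nonneg)
  ultimately show ?thesis by simp
qed

lemma exists_earlier_within_radius:
  assumes "2 \<le> m" "m \<le> n" "x \<in> P"
  obtains j where "1 \<le> j" "j < m" "dist x (p j) \<le> R (m - 1)"
proof -
  have "closed (p ` {1..<m})" "p ` {1..<m} \<noteq> {}"
    using assms(1) by (auto intro: finite_imp_closed)
  then obtain y where "y \<in> p ` {1..<m}" "infdist x (p ` {1..<m}) = dist x y"
    by (rule infdist_attains_inf)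
  with infdist_prefix_le_radius[OF assms] that show ?thesis by auto
qed

lemma radius_le_dist:
  assumes "1 \<le> i" "i < j" "j \<le> n"
  shows "R (j - 1) \<le> dist (p i) (p j)"
proof (cases "j = 2")
  case True
  \<comment> \<open>\<open>R 1\<close> is the radius of \<open>P\<close> around \<open>p 1\<close>, not \<open>infdist (p 2) {p 1}\<close>; the greedy
      choice of \<open>p 2\<close> makes the two agree.\<close>
  have "R 1 = Max ((\<lambda>x. dist x (p 1)) ` P)"
    by (simp add: greedy_radius_def)
  also have "\<dots> \<le> dist (p 2) (p 1)"
  proof (rule Max.boundedI)
    show "finite ((\<lambda>x. dist x (p 1)) ` P)" "(\<lambda>x. dist x (p 1)) ` P \<noteq> {}"
      using finite_P two_le_card by auto
  next
    fix d assume "d \<in> (\<lambda>x. dist x (p 1)) ` P"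
    then obtain x where "x \<in> P" "d = dist x (p 1)" by auto
    then show "d \<le> dist (p 2) (p 1)"
      using infdist_prefix_le[of 2 x] two_le_card unfolding prefix_two by (cases "x = p 1") auto
  qed
  moreover have "i = 1" using True assms by simp
  ultimately show ?thesis
    using True by (simp add: dist_commute)
next
  case False
  then have "R (j - 1) = infdist (p j) (p ` {1..<j})"
    using radius_eq_infdist[of "j - 1"] assms by simp
  also have "\<dots> \<le> dist (p j) (p i)"
    using assms by (intro infdist_le) auto
  finally show ?thesis by (simp add: dist_commute)
qed

lemma radius_ge_of_earlier_far:
  assumes "2 \<le> g" "g \<le> n" "x \<in> P"
    and far: "\<And>j. 1 \<le> j \<Longrightarrow> j < g \<Longrightarrow> dist q x + d \<le> dist q (p j)"
  shows "d \<le> R (g - 1)"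
proof -
  obtain j where "1 \<le> j" "j < g" "dist x (p j) \<le> R (g - 1)"
    using exists_earlier_within_radius[OF assms(1-3)] .
  then show ?thesis
    using far dist_triangle[of q "p j" x] dist_commute[of "p j" x] by fastforce
qed

lemma least_index_closer:
  assumes "x \<in> P" "dist q x < b"
  obtains g where "1 \<le> g" "g \<le> n" "dist q (p g) < b"
    and "\<And>i. 1 \<le> i \<Longrightarrow> i < g \<Longrightarrow> b \<le> dist q (p i)"
proof -
  define close where "close i \<longleftrightarrow> 1 \<le> i \<and> dist q (p i) < b" for i
  obtain k where k: "1 \<le> k" "k \<le> n" "x = p k"
    using assms(1) image_p by (metis atLeastAtMost_iff imageE)
  then have "close k"
    using assms(2) by (simp add: close_def)
  then have "close (Least close)" "Least close \<le> k"
    by (rule LeastI, rule Least_le)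
  moreover have "b \<le> dist q (p i)" if "1 \<le> i" "i < Least close" for i
    using not_less_Least[OF that(2)] that(1) by (simp add: close_def)
  ultimately show ?thesis
    using k(2) by (intro that[of "Least close"]) (auto simp: close_def)
qed

lemma p1_ne_p2: "p 1 \<noteq> p 2"
  using p_eq_iff[of 1 2] two_le_card by simp

lemma min_dist_pos: "0 < \<delta>"
  using Min_pairwise_dists_pos[OF finite_P p_in_P p_in_P p1_ne_p2] two_le_card by simp

lemma min_dist_le_dist: "x \<in> P \<Longrightarrow> y \<in> P \<Longrightarrow> x \<noteq> y \<Longrightarrow> \<delta> \<le> dist x y"
  using Min_pairwise_dists_le[OF finite_P] .

lemma dist_le_diam:
  assumes "x \<in> P" "y \<in> P"
  shows "dist x y \<le> diam"
proof (cases "x = y")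
  case True
  have "0 \<le> dist (p 1) (p 2)" by simp
  also have "\<dots> \<le> diam"
    using two_le_card by (intro dist_le_Max_pairwise_dists finite_P p_in_P p1_ne_p2) auto
  finally show ?thesis using True by simp
qed (use assms dist_le_Max_pairwise_dists[OF finite_P] in auto)

lemma min_dist_le_radius:
  assumes "2 \<le> i" "i \<le> n"
  shows "\<delta> \<le> R (i - 1)"
proof -
  obtain j where j: "1 \<le> j" "j < i" "dist (p i) (p j) \<le> R (i - 1)"
    using exists_earlier_within_radius[OF assms p_in_P[of i]] assms by auto
  have "\<delta> \<le> dist (p i) (p j)"
    using j assms by (intro min_dist_le_dist) (auto simp: p_in_P p_eq_iff)
  with j show ?thesis by simp
qed

lemma radius_le_diam:
  assumes "2 \<le> i" "i \<le> n"
  shows "R (i - 1) \<le> diam"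
proof -
  have "R (i - 1) \<le> dist (p 1) (p i)"
    using assms by (intro radius_le_dist) auto
  also have "\<dots> \<le> diam"
    using assms by (intro dist_le_diam p_in_P) auto
  finally show ?thesis .
qed

lemma spread_eq: "spread P = diam / \<delta>"
  by (simp add: spread_def pairwise_dists_def)

lemma one_le_spread: "1 \<le> spread P"
  using min_dist_le_radius[of 2] radius_le_diam[of 2] two_le_card min_dist_pos
  by (simp add: spread_eq)

end

locale greedy_routing = greedy_permutation +
  fixes \<epsilon> :: real
  assumes eps_pos: "0 < \<epsilon>" and eps_less: "\<epsilon> < 1/2"
begin

definition "ratio = 1 - \<epsilon>/4"

definition "slack = \<epsilon> * (1 + ratio) / 8"

definition "nn_dist q = Min ((\<lambda>x. dist q x) ` P)"

definition "far_before q c \<longleftrightarrow>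
  (\<forall>i. 1 \<le> i \<longrightarrow> i < c \<longrightarrow> nn_dist q + slack * dist q (p c) \<le> dist q (p i))"

lemma ratio_pos: "0 < ratio" and ratio_less_1: "ratio < 1"
  using eps_pos eps_less by (auto simp: ratio_def)

lemma slack_pos: "0 < slack"
  using eps_pos ratio_pos by (simp add: slack_def)

lemma improves_iff: "improves p \<epsilon> q c i \<longleftrightarrow> dist q (p i) \<le> ratio * dist q (p c)"
  by (simp add: improves_def ratio_def)

lemma improves_dist_le: "improves p \<epsilon> q c i \<Longrightarrow> dist q (p i) \<le> dist q (p c)"
  unfolding improves_iff using ratio_less_1
  by (meson less_eq_real_def mult_left_le_one_le order_trans ratio_pos zero_le_dist)

lemma nn_dist_le: "x \<in> P \<Longrightarrow> nn_dist q \<le> dist q x"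
  unfolding nn_dist_def using finite_P by (intro Min_le) auto

lemma nearest_neighbour:
  obtains N where "N \<in> P" "dist q N = nn_dist q"
proof -
  have "nn_dist q \<in> (\<lambda>x. dist q x) ` P"
    unfolding nn_dist_def using finite_P two_le_card by (intro Min_in) auto
  with that show ?thesis by auto
qed

lemma nn_dist_nonneg: "0 \<le> nn_dist q"
  by (metis nearest_neighbour zero_le_dist)

lemma slack_gap:
  assumes "(1 + \<epsilon>) * nn_dist q < D"
  shows "nn_dist q + slack * D < ratio * D"
proof -
  have "(1 + \<epsilon>) * (ratio - slack) = 1 + \<epsilon>/2 - 15/32 * \<epsilon>\<^sup>2 + \<epsilon>^3/32"
    by (simp add: ratio_def slack_def field_simps power2_eq_square power3_eq_cube)
  moreover have "\<epsilon>\<^sup>2 \<le> \<epsilon>/2"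
    using eps_pos eps_less by (simp add: power2_eq_square)
  moreover have "0 \<le> \<epsilon>^3"
    using eps_pos by simp
  ultimately have margin: "1 \<le> (1 + \<epsilon>) * (ratio - slack)"
    using eps_pos by linarith
  have "0 \<le> (1 + \<epsilon>) * nn_dist q"
    using nn_dist_nonneg eps_pos by simp
  then have "0 \<le> D"
    using assms by linarith
  then have "(1 + \<epsilon>) * nn_dist q < (1 + \<epsilon>) * ((ratio - slack) * D)"
    using assms mult_left_mono[OF margin, of D] by (simp add: algebra_simps)
  then have "nn_dist q < (ratio - slack) * D"
    using eps_pos by (subst (asm) mult_less_cancel_left_pos) auto
  then show ?thesis
    by (simp add: algebra_simps)
qed

lemma out_edges_iff:
  assumes "1 \<le> a" "a \<le> n"
  shows "i \<in> set (out_edges P p \<epsilon> a) \<longleftrightarrow>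
    2 \<le> i \<and> i \<le> n \<and> a < i \<and> dist (p a) (p i) \<le> 8 * R (i - 1) / \<epsilon>"
proof -
  have "i \<in> set (out_edges P p \<epsilon> a) \<longleftrightarrow> 1 \<le> i \<and> i \<le> n \<and> p a \<in> friend_list P p \<epsilon> i"
    by (auto simp: out_edges_def)
  then show ?thesis
    using p_in_prefix_iff[OF assms, of i] by (auto simp: friend_list_def)
qed

lemma sorted_out_edges: "sorted_wrt (<) (out_edges P p \<epsilon> a)"
  unfolding out_edges_def by (intro sorted_wrt_filter sorted_wrt_upt)

lemma length_out_edges: "length (out_edges P p \<epsilon> a) = card (set (out_edges P p \<epsilon> a))"
  unfolding out_edges_def by (intro distinct_card[symmetric]) simp

lemma improving_out_edge:
  assumes c: "1 \<le> c" "c \<le> n" and far: "far_before q c"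
    and big: "(1 + \<epsilon>) * nn_dist q < dist q (p c)"
  obtains g where "g \<in> set (out_edges P p \<epsilon> c)" and "improves p \<epsilon> q c g"
    and "\<And>i. 1 \<le> i \<Longrightarrow> i < g \<Longrightarrow> nn_dist q + slack * dist q (p c) \<le> dist q (p i)"
proof -
  define D where "D = dist q (p c)"
  define \<rho> where "\<rho> = nn_dist q"
  have gap: "\<rho> + slack * D < ratio * D"
    using slack_gap[OF big] by (simp add: \<rho>_def D_def)
  have "0 \<le> (1 + \<epsilon>) * \<rho>"
    using nn_dist_nonneg eps_pos by (simp add: \<rho>_def)
  then have "0 < D"
    using big unfolding \<rho>_def D_def by linarith
  then have ratio_D: "ratio * D < D"
    using ratio_less_1 by simp
  obtain N where N: "N \<in> P" "dist q N = \<rho>"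
    using nearest_neighbour \<rho>_def by metis
  have "dist q N < \<rho> + slack * D"
    using N slack_pos \<open>0 < D\<close> by simp
  then obtain g where g: "1 \<le> g" "g \<le> n" "dist q (p g) < \<rho> + slack * D"
    and before_g: "\<And>i. 1 \<le> i \<Longrightarrow> i < g \<Longrightarrow> \<rho> + slack * D \<le> dist q (p i)"
    using least_index_closer[OF N(1)] by blast
  have "c < g"
  proof (rule ccontr)
    assume "\<not> c < g"
    then consider "g < c" | "g = c" by linarith
    then show False
      using far g gap ratio_D unfolding far_before_def \<rho>_def D_def
      by cases fastforce+
  qed
  with c have "2 \<le> g" by linarith
  have "slack * D \<le> R (g - 1)"
    using radius_ge_of_earlier_far[OF \<open>2 \<le> g\<close> g(2) N(1), of q "slack * D"] before_g N(2)
    by simp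
  then have "8 * (slack * D) / \<epsilon> \<le> 8 * R (g - 1) / \<epsilon>"
    using eps_pos by (simp add: divide_right_mono)
  moreover have "dist (p c) (p g) \<le> D + ratio * D"
    using dist_triangle[of "p c" "p g" q] g gap by (simp add: D_def dist_commute)
  moreover have "D + ratio * D = 8 * (slack * D) / \<epsilon>"
    using eps_pos by (simp add: slack_def field_simps)
  ultimately have "g \<in> set (out_edges P p \<epsilon> c)"
    using out_edges_iff[OF c] \<open>2 \<le> g\<close> \<open>c < g\<close> g by auto
  moreover have "improves p \<epsilon> q c g"
    using g gap by (simp add: improves_iff D_def)
  ultimately show ?thesis
    using that before_g by (simp add: \<rho>_def D_def)
qed

lemma route_step:
  assumes "k = length (takeWhile (\<lambda>i. \<not> improves p \<epsilon> q c i) (out_edges P p \<epsilon> c))"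
    and "k < length (out_edges P p \<epsilon> c)" and "1 \<le> c" "c \<le> n"
  defines "b \<equiv> out_edges P p \<epsilon> c ! k"
  shows "c < b" and "b \<le> n" and "improves p \<epsilon> q c b"
    and "\<And>m. m \<in> set (out_edges P p \<epsilon> c) \<Longrightarrow> improves p \<epsilon> q c m \<Longrightarrow> b \<le> m"
  using sorted_first_satisfying[OF sorted_out_edges assms(1,2)] out_edges_iff[OF assms(3,4)]
  unfolding b_def by auto

lemma greedy_route_end:
  assumes "greedy_route P p \<epsilon> q c r t" "1 \<le> c" "c \<le> n"
  shows "1 \<le> r \<and> r \<le> n \<and> dist q (p r) \<le> dist q (p c)"
  using assms
proof (induction rule: greedy_route.induct)
  case (move k c r t)
  note step = route_step[OF move.hyps(1,2) move.prems]
  with move.IH show ?case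
    using improves_dist_le[OF step(3)] by fastforce
qed simp

lemma greedy_route_exists:
  "1 \<le> c \<Longrightarrow> c \<le> n \<Longrightarrow> \<exists>r t. greedy_route P p \<epsilon> q c r t"
proof (induction "n - c" arbitrary: c rule: less_induct)
  case less
  show ?case
  proof (cases "\<exists>i \<in> set (out_edges P p \<epsilon> c). improves p \<epsilon> q c i")
    case False
    then show ?thesis
      using greedy_route.stop by blast
  next
    case True
    define k where "k = length (takeWhile (\<lambda>i. \<not> improves p \<epsilon> q c i) (out_edges P p \<epsilon> c))"
    have "k < length (out_edges P p \<epsilon> c)"
      using True unfolding k_def by (auto intro: length_takeWhile_less)
    note step = route_step[OF k_def this less.prems]
    with less obtain r t where "greedy_route P p \<epsilon> q (out_edges P p \<epsilon> c ! k) r t"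
      by fastforce
    with greedy_route.move[OF k_def \<open>k < _\<close>] show ?thesis
      by blast
  qed
qed

lemma greedy_route_approx:
  assumes "greedy_route P p \<epsilon> q c r t" "1 \<le> c" "c \<le> n" "far_before q c"
  shows "dist q (p r) \<le> (1 + \<epsilon>) * nn_dist q"
  using assms
proof (induction rule: greedy_route.induct)
  case (stop c)
  show ?case
  proof (rule ccontr)
    assume "\<not> ?case"
    then obtain g where "g \<in> set (out_edges P p \<epsilon> c)" "improves p \<epsilon> q c g"
      using improving_out_edge[OF stop.prems] by (metis not_le)
    with stop.hyps show False
      by blast
  qed
next
  case (move k c r t)
  define b where "b = out_edges P p \<epsilon> c ! k"
  note step = route_step[OF move.hyps(1,2) move.prems(1,2), folded b_def]
  have route_b: "greedy_route P p \<epsilon> q b r t"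
    using move.hyps(3) by (simp add: b_def)
  show ?case
  proof (cases "(1 + \<epsilon>) * nn_dist q < dist q (p b)")
    case False
    then show ?thesis
      using greedy_route_end[OF route_b] step by fastforce
  next
    case True
    then have "(1 + \<epsilon>) * nn_dist q < dist q (p c)"
      using improves_dist_le[OF step(3)] by linarith
    then obtain g where g: "g \<in> set (out_edges P p \<epsilon> c)" "improves p \<epsilon> q c g"
      "\<And>i. 1 \<le> i \<Longrightarrow> i < g \<Longrightarrow> nn_dist q + slack * dist q (p c) \<le> dist q (p i)"
      using improving_out_edge move.prems by blast
    have "slack * dist q (p b) \<le> slack * dist q (p c)"
      using improves_dist_le[OF step(3)] slack_pos by simp
    then have "far_before q b"
      unfolding far_before_def using g(3) step(4)[OF g(1,2)] by fastforce
    then show ?thesis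
      using move.IH step by (simp add: b_def)
  qed
qed

lemma greedy_route_cost_le_steps:
  assumes "greedy_route P p \<epsilon> q c r t" "1 \<le> c" "c \<le> n"
    and deg: "\<And>a. 1 \<le> a \<Longrightarrow> a \<le> n \<Longrightarrow> real (length (out_edges P p \<epsilon> a)) \<le> deg"
    and "ratio ^ s * dist q (p c) < max (nn_dist q) (\<delta>/2)"
  shows "real t \<le> (real s + 1) * (2 + deg)"
  using assms(1-3,5)
proof (induction arbitrary: s rule: greedy_route.induct)
  case (stop c)
  then have "real (length (out_edges P p \<epsilon> c)) \<le> deg"
    using deg by auto
  moreover have "0 \<le> real s * (2 + deg)"
    using calculation of_nat_0_le_iff[of "length (out_edges P p \<epsilon> c)"] by simp
  ultimately show ?case
    by (simp only: of_nat_add of_nat_1 distrib_right mult_1_left)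
next
  case (move k c r t)
  define b where "b = out_edges P p \<epsilon> c ! k"
  note step = route_step[OF move.hyps(1,2) move.prems(1,2), folded b_def]
  \<comment> \<open>\<open>p c\<close> and \<open>p b\<close> are distinct points of \<open>P\<close> within \<open>dist q (p c)\<close> of \<open>q\<close>, which forces \<open>s > 0\<close>.\<close>
  have "\<delta> \<le> dist (p c) (p b)"
    using step move.prems by (intro min_dist_le_dist p_in_P) (auto simp: p_eq_iff)
  also have "\<dots> \<le> 2 * dist q (p c)"
    using dist_triangle[of "p c" "p b" q] improves_dist_le[OF step(3)] by (simp add: dist_commute)
  finally have "max (nn_dist q) (\<delta>/2) \<le> dist q (p c)"
    using nn_dist_le p_in_P move.prems by simp
  with move.prems(3) obtain s' where s': "s = Suc s'"
    by (cases s) auto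
  have "ratio ^ s' * dist q (p b) \<le> ratio ^ s' * (ratio * dist q (p c))"
    using step(3) ratio_pos by (simp add: improves_iff mult_left_mono)
  also have "\<dots> < max (nn_dist q) (\<delta>/2)"
    using move.prems(3) s' by (simp add: ac_simps)
  finally have "real t \<le> (real s' + 1) * (2 + deg)"
    using move.IH[of s'] step by (simp add: b_def)
  moreover have "real (k + 1) \<le> deg"
    using deg[OF move.prems(1,2)] move.hyps(2) by linarith
  ultimately show ?case
    using s' by (simp add: algebra_simps)
qed

lemma card_out_edges_radius_range:
  assumes a: "1 \<le> a" "a \<le> n" and "0 < s"
  shows "real (card {i \<in> set (out_edges P p \<epsilon> a). s \<le> R (i - 1) \<and> R (i - 1) < 2 * s})
    \<le> (1 + 32/\<epsilon>) ^ DIM('a)"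
proof -
  define S where "S = {i \<in> set (out_edges P p \<epsilon> a). s \<le> R (i - 1) \<and> R (i - 1) < 2 * s}"
  have S: "2 \<le> i \<and> i \<le> n \<and> dist (p a) (p i) \<le> 8 * R (i - 1) / \<epsilon> \<and> s \<le> R (i - 1) \<and> R (i - 1) < 2 * s"
    if "i \<in> S" for i
    using that out_edges_iff[OF a] by (auto simp: S_def)
  then have "S \<subseteq> {1..n}" by fastforce
  then have "finite S" and inj: "inj_on p S"
    using inj_on_subset[OF bij_betw_imp_inj_on[OF bij_p]] finite_subset by auto
  have "p ` S \<subseteq> cball (p a) (16 * s / \<epsilon>)"
  proof
    fix x assume "x \<in> p ` S"
    then obtain i where i: "i \<in> S" "x = p i" by blast
    have "8 * R (i - 1) / \<epsilon> \<le> 16 * s / \<epsilon>"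
      using S[OF i(1)] eps_pos by (simp add: divide_right_mono)
    then show "x \<in> cball (p a) (16 * s / \<epsilon>)"
      using S[OF i(1)] i(2) by simp
  qed
  moreover have "s \<le> dist (p i) (p j)" if "i \<in> S" "j \<in> S" "i < j" for i j
    using S[OF that(1)] S[OF that(2)] radius_le_dist[of i j] that(3) by fastforce
  then have "s \<le> dist x y" if "x \<in> p ` S" "y \<in> p ` S" "x \<noteq> y" for x y
    using that by (auto simp: dist_commute) (metis dist_commute linorder_neqE_nat)
  ultimately have "real (card (p ` S)) \<le> ((16 * s / \<epsilon> + s/2) / (s/2)) ^ DIM('a)"
    using \<open>finite S\<close> \<open>0 < s\<close> eps_pos by (intro card_separated_subset_cball_le) auto
  also have "(16 * s / \<epsilon> + s/2) / (s/2) = 1 + 32/\<epsilon>"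
    using \<open>0 < s\<close> eps_pos by (simp add: field_simps)
  finally show ?thesis
    using card_image[OF inj] by (simp add: S_def)
qed

lemma length_out_edges_le:
  assumes a: "1 \<le> a" "a \<le> n"
  shows "real (length (out_edges P p \<epsilon> a)) \<le> (1 + 32/\<epsilon>) ^ DIM('a) * (log 2 (spread P) + 1)"
proof -
  define level where "level i = nat \<lfloor>log 2 (R (i - 1) / \<delta>)\<rfloor>" for i
  define L where "L = nat \<lfloor>log 2 (spread P)\<rfloor>"
  define S where "S l = {i \<in> set (out_edges P p \<epsilon> a). \<delta> * 2 ^ l \<le> R (i - 1) \<and> R (i - 1) < 2 * (\<delta> * 2 ^ l)}"
    for l :: nat
  have "set (out_edges P p \<epsilon> a) \<subseteq> (\<Union>l\<le>L. S l)"
  proof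
    fix i assume i: "i \<in> set (out_edges P p \<epsilon> a)"
    then have "2 \<le> i" "i \<le> n"
      using out_edges_iff[OF a] by auto
    then have "1 \<le> R (i - 1) / \<delta>" "R (i - 1) / \<delta> \<le> spread P"
      using min_dist_le_radius radius_le_diam min_dist_pos
      by (auto simp: spread_eq divide_right_mono)
    then have "level i \<le> L" "\<delta> * 2 ^ level i \<le> R (i - 1)" "R (i - 1) < 2 * (\<delta> * 2 ^ level i)"
      using dyadic_floor_log[of "R (i - 1) / \<delta>"] min_dist_pos
      by (auto simp: level_def L_def pos_le_divide_eq pos_divide_less_eq mult_ac
          intro!: nat_mono floor_mono log_mono)
    with i show "i \<in> (\<Union>l\<le>L. S l)"
      by (auto simp: S_def)
  qed
  then have "real (length (out_edges P p \<epsilon> a)) \<le> real (card (\<Union>l\<le>L. S l))"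
    by (simp add: length_out_edges card_mono S_def)
  also have "\<dots> \<le> (\<Sum>l\<le>L. real (card (S l)))"
    by (simp add: card_UN_le flip: of_nat_sum)
  also have "\<dots> \<le> (\<Sum>l\<le>L. (1 + 32/\<epsilon>) ^ DIM('a))"
    using card_out_edges_radius_range[OF a] min_dist_pos by (intro sum_mono) (simp add: S_def)
  also have "\<dots> = (1 + 32/\<epsilon>) ^ DIM('a) * (real L + 1)"
    by simp
  also have "real L \<le> log 2 (spread P)"
    using one_le_spread by (simp add: L_def)
  finally show ?thesis
    using eps_pos by (simp add: mult_left_mono)
qed

lemma moves_bound: "4 * ln (1 + 2 * spread P) / \<epsilon> + 2 \<le> 9 * (1 + ln (spread P)) / \<epsilon>"
proof -
  have "ln (1 + 2 * spread P) \<le> ln (3 * spread P)"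
    using one_le_spread by simp
  also have "\<dots> = ln 3 + ln (spread P)"
    using one_le_spread by (simp add: ln_mult)
  also have "ln (3::real) \<le> 2"
    using ln_le_minus_one[of 3] by simp
  finally have "ln (1 + 2 * spread P) \<le> 2 + ln (spread P)"
    by simp
  moreover have "0 \<le> ln (spread P)"
    using one_le_spread by simp
  ultimately have "4 * ln (1 + 2 * spread P) + 1 \<le> 9 * (1 + ln (spread P))"
    unfolding distrib_left by linarith
  then have "(4 * ln (1 + 2 * spread P) + 1) / \<epsilon> \<le> 9 * (1 + ln (spread P)) / \<epsilon>"
    using eps_pos by (simp add: divide_right_mono)
  moreover have "2 \<le> 1 / \<epsilon>"
    using eps_pos eps_less by (simp add: field_simps)
  ultimately show ?thesis
    by (simp add: add_divide_distrib)
qed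

lemma degree_bound:
  "2 + (1 + 32/\<epsilon>) ^ DIM('a) * (log 2 (spread P) + 1)
    \<le> 3 * 33 ^ DIM('a) * (1/\<epsilon>) ^ DIM('a) * (1 + ln (spread P))"
proof -
  define X where "X = (1 + 32/\<epsilon>) ^ DIM('a)"
  have "1 \<le> X"
    using eps_pos by (simp add: X_def)
  have "X \<le> (33 * (1/\<epsilon>)) ^ DIM('a)"
    unfolding X_def using eps_pos eps_less by (intro power_mono) (auto simp: field_simps)
  then have X: "X \<le> 33 ^ DIM('a) * (1/\<epsilon>) ^ DIM('a)"
    by (simp add: power_divide)
  have "0 \<le> ln (spread P)"
    using one_le_spread by simp
  have "log 2 (spread P) = ln (spread P) / ln 2"
    by (simp add: log_def)
  also have "\<dots> \<le> ln (spread P) / (2/3)"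
    using ln2_ge_two_thirds \<open>0 \<le> ln (spread P)\<close> by (intro divide_left_mono) auto
  finally have "log 2 (spread P) \<le> 3/2 * ln (spread P)"
    by simp
  then have "X * log 2 (spread P) \<le> 3/2 * (X * ln (spread P))"
    using \<open>1 \<le> X\<close> mult_left_mono[of _ _ X] by fastforce
  moreover have "0 \<le> X * ln (spread P)"
    using \<open>1 \<le> X\<close> \<open>0 \<le> ln (spread P)\<close> by simp
  ultimately have "2 + X * (log 2 (spread P) + 1) \<le> 3 * X * (1 + ln (spread P))"
    using \<open>1 \<le> X\<close> unfolding distrib_left distrib_right by linarith
  also have "\<dots> \<le> 3 * (33 ^ DIM('a) * (1/\<epsilon>) ^ DIM('a)) * (1 + ln (spread P))"
    using X \<open>0 \<le> ln (spread P)\<close> by (intro mult_right_mono mult_left_mono) auto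
  finally show ?thesis
    by (simp add: X_def mult.assoc)
qed

lemma dist_first_le: "dist q (p 1) \<le> (1 + 2 * spread P) * max (nn_dist q) (\<delta>/2)"
proof -
  define M where "M = max (nn_dist q) (\<delta>/2)"
  obtain N where N: "N \<in> P" "dist q N = nn_dist q"
    by (rule nearest_neighbour)
  have "dist q (p 1) \<le> dist q N + dist N (p 1)"
    by (rule dist_triangle)
  also have "\<dots> \<le> M + spread P * \<delta>"
    using N dist_le_diam[OF N(1) p_in_P[of 1]] two_le_card min_dist_pos
    by (simp add: M_def spread_eq)
  also have "\<dots> \<le> (1 + 2 * spread P) * M"
    using one_le_spread mult_left_mono[of "\<delta>" "2 * M" "spread P"]
    by (simp add: M_def algebra_simps)
  finally show ?thesis
    by (simp add: M_def)
qed

lemma greedy_route_cost: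
  assumes "greedy_route P p \<epsilon> q 1 r t"
  shows "real t \<le> 27 * 33 ^ DIM('a) * (1/\<epsilon>) ^ (DIM('a) + 1) * (1 + ln (spread P))\<^sup>2"
proof -
  define \<Phi> where "\<Phi> = spread P"
  define M where "M = max (nn_dist q) (\<delta>/2)"
  have "0 < M"
    using min_dist_pos by (simp add: M_def less_max_iff_disj)
  obtain s where s: "ratio ^ s * (1 + 2 * \<Phi>) < 1" "real s \<le> 4 * ln (1 + 2 * \<Phi>) / \<epsilon> + 1"
    using geometric_decay_steps[of \<epsilon> "1 + 2 * \<Phi>"] eps_pos eps_less one_le_spread
    by (auto simp: ratio_def \<Phi>_def)
  have "ratio ^ s * dist q (p 1) \<le> ratio ^ s * ((1 + 2 * \<Phi>) * M)"
    using dist_first_le ratio_pos by (simp add: mult_left_mono M_def \<Phi>_def)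
  also have "\<dots> < M"
    using s(1) \<open>0 < M\<close> by (simp add: mult.assoc[symmetric])
  finally have "real t \<le> (real s + 1) * (2 + (1 + 32/\<epsilon>) ^ DIM('a) * (log 2 \<Phi> + 1))"
    using greedy_route_cost_le_steps[OF assms _ _ length_out_edges_le] two_le_card
    by (simp add: M_def \<Phi>_def)
  also have "\<dots> \<le> (9 * (1 + ln \<Phi>) / \<epsilon>) * (3 * 33 ^ DIM('a) * (1/\<epsilon>) ^ DIM('a) * (1 + ln \<Phi>))"
    using s(2) moves_bound degree_bound one_le_spread eps_pos
    by (intro mult_mono) (auto simp: \<Phi>_def)
  also have "\<dots> = 27 * 33 ^ DIM('a) * (1/\<epsilon>) ^ (DIM('a) + 1) * (1 + ln \<Phi>)\<^sup>2"
    by (simp add: power2_eq_square field_simps)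
  finally show ?thesis
    by (simp add: \<Phi>_def)
qed

end

theorem lemma4p3:
  "\<exists>C > 0. \<forall>(P :: 'a::euclidean_space set) p \<epsilon> q.
     finite P \<and> card P \<ge> 2 \<and> 0 < \<epsilon> \<and> \<epsilon> < 1/2 \<and> greedy_perm P p \<longrightarrow>
       (\<exists>r t. greedy_route P p \<epsilon> q 1 r t) \<and>
       (\<forall>r t. greedy_route P p \<epsilon> q 1 r t \<longrightarrow>
          p r \<in> P \<and>
          dist q (p r) \<le> (1 + \<epsilon>) * Min ((\<lambda>p'. dist q p') ` P) \<and>
          real t \<le> C * (1 / \<epsilon>) ^ (DIM('a) + 1) * (1 + ln (spread P)) ^ 2)"
proof (intro exI[of _ "27 * 33 ^ DIM('a) :: real"] conjI allI impI)
  fix P :: "'a set" and p :: "nat \<Rightarrow> 'a" and \<epsilon> :: real and q :: 'a and r t :: nat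
  assume "finite P \<and> 2 \<le> card P \<and> 0 < \<epsilon> \<and> \<epsilon> < 1/2 \<and> greedy_perm P p"
  then interpret greedy_routing P p \<epsilon>
    by unfold_locales auto
  show "\<exists>r t. greedy_route P p \<epsilon> q 1 r t"
    using greedy_route_exists two_le_card by simp
  assume route: "greedy_route P p \<epsilon> q 1 r t"
  have "far_before q 1"
    by (simp add: far_before_def)
  then show "dist q (p r) \<le> (1 + \<epsilon>) * Min ((\<lambda>p'. dist q p') ` P)"
    using greedy_route_approx[OF route] two_le_card by (simp add: nn_dist_def)
  show "p r \<in> P"
    using greedy_route_end[OF route] two_le_card by (simp add: p_in_P)
  show "real t \<le> 27 * 33 ^ DIM('a) * (1 / \<epsilon>) ^ (DIM('a) + 1) * (1 + ln (spread P)) ^ 2"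
    using greedy_route_cost[OF route] by simp
qed simp

end
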